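(* If the $r\times r$ minors of an $n\times n$ symmetric matrix of indeterminates do not form a tropical basis, then the $r\times r$ minors of an $(n+1)\times(n+1)$ symmetric matrix of indeterminates do not form a tropical basis.
   Context: Let $\tilde K$ be the field of Hahn series $\sum_{\alpha\in A}c_\alpha t^\alpha$ ($A\subset\mathbb R$ well-ordered, $c_\alpha\in\mathbb C$); for nonzero $a\in\tilde K$, $\deg(a)$ is the smallest exponent with nonzero coefficient. A symmetric lift of a real symmetric matrix $A$ is a symmetric matrix $\tilde A$ over $\tilde K$ with all entries nonzero and $\deg(\tilde a_{i,j})=A_{i,j}$. For an $r\times r$ submatrix of $A$ with row index set $I$ and column index set $J$, each bijection $\rho:I\to J$ gives a monomial $\prod_{i\in I}X_{i,\rho(i)}$ in commuting variables subject to $X_{i,j}=X_{j,i}$, with value $\sum_{i\in I}A_{i,\rho(i)}$; the submatrix is symmetrically tropically singular if the minimum value is attained by at least two distinct monomials. The $r\times r$ minors of an $n\times n$ symmetric matrix of indeterminates form a tropical basis if for every real symmetric $n\times n$ matrix $A$: every $r\times r$ submatrix of $A$ is symmetrically tropically singular if and only if $A$ has a symmetric lift of rank at most $r-1$ (equivalently, the tropical prevariety of the tropicalized minors equals the tropicalization of the variety they define). *)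

theory Defs
  imports Complex_Main "HOL-Library.Multiset"
begin

text \<open>A Hahn series sum c_alpha t^alpha is represented by its coefficient function
  real => complex; it is a Hahn series iff its support is well-ordered.\<close>

definition hahn :: "(real \<Rightarrow> complex) \<Rightarrow> bool" where
  "hahn a \<longleftrightarrow> (\<forall>S. S \<subseteq> {x. a x \<noteq> 0} \<longrightarrow> S \<noteq> {} \<longrightarrow> (\<exists>m\<in>S. \<forall>y\<in>S. m \<le> y))"

definition hahn_deg :: "(real \<Rightarrow> complex) \<Rightarrow> real" where
  "hahn_deg a = (LEAST x. a x \<noteq> 0)"

text \<open>Coefficient at exponent g of the product of the Hahn series a i, i in I
  (Cauchy product; the index set is finite because supports are well-ordered).\<close>
definition prod_coeff :: "(nat \<Rightarrow> real \<Rightarrow> complex) \<Rightarrow> nat set \<Rightarrow> real \<Rightarrow> complex" where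
  "prod_coeff a I g =
     (\<Sum>\<alpha> \<in> {\<alpha>. (\<forall>i\<in>I. a i (\<alpha> i) \<noteq> 0) \<and> (\<forall>i. i \<notin> I \<longrightarrow> \<alpha> i = 0)
                \<and> (\<Sum>i\<in>I. \<alpha> i) = g}.
        \<Prod>i\<in>I. a i (\<alpha> i))"

definition bijs :: "nat set \<Rightarrow> nat set \<Rightarrow> (nat \<Rightarrow> nat) set" where
  "bijs I J = {\<rho>. bij_betw \<rho> I J \<and> (\<forall>x. x \<notin> I \<longrightarrow> \<rho> x = x)}"

text \<open>Number of inversions of rho w.r.t. the natural orders of I and J; its parity is the
  sign of rho as a permutation when rows and columns are listed increasingly.\<close>
definition inversions :: "nat set \<Rightarrow> (nat \<Rightarrow> nat) \<Rightarrow> nat" where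
  "inversions I \<rho> = card {(i, i'). i \<in> I \<and> i' \<in> I \<and> i < i' \<and> \<rho> i > \<rho> i'}"

definition minor_coeff ::
  "(nat \<Rightarrow> nat \<Rightarrow> real \<Rightarrow> complex) \<Rightarrow> nat set \<Rightarrow> nat set \<Rightarrow> real \<Rightarrow> complex" where
  "minor_coeff M I J g =
     (\<Sum>\<rho>\<in>bijs I J. (-1) ^ inversions I \<rho> * prod_coeff (\<lambda>i. M i (\<rho> i)) I g)"

definition minor_vanishes :: "(nat \<Rightarrow> nat \<Rightarrow> real \<Rightarrow> complex) \<Rightarrow> nat set \<Rightarrow> nat set \<Rightarrow> bool" where
  "minor_vanishes M I J \<longleftrightarrow> (\<forall>g. minor_coeff M I J g = 0)"

text \<open>An n x n matrix (indices 0..n-1) has rank at most r-1, i.e. lies in the variety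
  defined by the r x r minors.\<close>
definition rank_le_minors :: "nat \<Rightarrow> nat \<Rightarrow> (nat \<Rightarrow> nat \<Rightarrow> real \<Rightarrow> complex) \<Rightarrow> bool" where
  "rank_le_minors n r M \<longleftrightarrow>
     (\<forall>I J. I \<subseteq> {..<n} \<longrightarrow> J \<subseteq> {..<n} \<longrightarrow> card I = r \<longrightarrow> card J = r \<longrightarrow> minor_vanishes M I J)"

definition sym_real :: "nat \<Rightarrow> (nat \<Rightarrow> nat \<Rightarrow> real) \<Rightarrow> bool" where
  "sym_real n A \<longleftrightarrow> (\<forall>i<n. \<forall>j<n. A i j = A j i)"

definition sym_lift :: "nat \<Rightarrow> (nat \<Rightarrow> nat \<Rightarrow> real) \<Rightarrow> (nat \<Rightarrow> nat \<Rightarrow> real \<Rightarrow> complex) \<Rightarrow> bool" where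
  "sym_lift n A M \<longleftrightarrow>
     (\<forall>i<n. \<forall>j<n. M i j = M j i \<and> hahn (M i j) \<and> M i j \<noteq> (\<lambda>_. 0)
                   \<and> hahn_deg (M i j) = A i j)"

text \<open>Monomial prod_{i in I} X_{i,rho i} with X_{i,j} = X_{j,i}: the multiset of unordered
  index pairs.\<close>
definition sym_monomial :: "nat set \<Rightarrow> (nat \<Rightarrow> nat) \<Rightarrow> nat set multiset" where
  "sym_monomial I \<rho> = image_mset (\<lambda>i. {i, \<rho> i}) (mset_set I)"

definition trop_value :: "(nat \<Rightarrow> nat \<Rightarrow> real) \<Rightarrow> nat set \<Rightarrow> (nat \<Rightarrow> nat) \<Rightarrow> real" where
  "trop_value A I \<rho> = (\<Sum>i\<in>I. A i (\<rho> i))"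

definition sym_trop_singular :: "(nat \<Rightarrow> nat \<Rightarrow> real) \<Rightarrow> nat set \<Rightarrow> nat set \<Rightarrow> bool" where
  "sym_trop_singular A I J \<longleftrightarrow>
     (\<exists>\<rho>1\<in>bijs I J. \<exists>\<rho>2\<in>bijs I J.
        (\<forall>\<sigma>\<in>bijs I J. trop_value A I \<rho>1 \<le> trop_value A I \<sigma>) \<and>
        trop_value A I \<rho>2 = trop_value A I \<rho>1 \<and>
        sym_monomial I \<rho>1 \<noteq> sym_monomial I \<rho>2)"

definition minors_trop_basis :: "nat \<Rightarrow> nat \<Rightarrow> bool" where
  "minors_trop_basis n r \<longleftrightarrow>
     (\<forall>A. sym_real n A \<longrightarrow>
        ((\<forall>I J. I \<subseteq> {..<n} \<longrightarrow> J \<subseteq> {..<n} \<longrightarrow> card I = r \<longrightarrow> card J = r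
                 \<longrightarrow> sym_trop_singular A I J)
         \<longleftrightarrow> (\<exists>M. sym_lift n A M \<and> rank_le_minors n r M)))"

end

theory Submission
  imports Defs "HOL-Library.FuncSet" "HOL-Combinatorics.Transposition"
begin

(* Take a symmetric counterexample A of size n = k + 1 (for n = 0 the equivalence holds
   trivially) and repeat its last row and column.
   An r x r submatrix of the enlarged matrix either contains both copies of a row or of a
   column, or it is a submatrix of A with indices relabelled monotonically.  In the first case
   it is symmetrically tropically singular (swapping the two copies in an optimal bijection gives
   a second optimal monomial), and the correspondingly enlarged lift of A has vanishing minor
   there (the same swap is a sign-reversing involution on the terms of the determinant, the
   copies being adjacent).  Since A and its lifts are also leading blocks of the enlarged
   matrices, both sides of the tropical basis equivalence are unchanged, so it fails again. *)

lemma bijs_bij_betw: "\<rho> \<in> bijs I J \<Longrightarrow> bij_betw \<rho> I J"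
  by (simp add: bijs_def)

lemma finite_bijs:
  assumes "finite I" "finite J"
  shows "finite (bijs I J)"
proof -
  have "bijs I J \<subseteq> (\<lambda>h x. if x \<in> I then h x else x) ` (I \<rightarrow>\<^sub>E J)"
  proof
    fix \<rho> assume \<rho>: "\<rho> \<in> bijs I J"
    then have "restrict \<rho> I \<in> I \<rightarrow>\<^sub>E J" "\<rho> = (\<lambda>x. if x \<in> I then restrict \<rho> I x else x)"
      unfolding bijs_def bij_betw_def by auto
    then show "\<rho> \<in> (\<lambda>h x. if x \<in> I then h x else x) ` (I \<rightarrow>\<^sub>E J)" by blast
  qed
  then show ?thesis
    using assms by (meson finite_PiE finite_imageI finite_subset)
qed

lemma bijs_empty: "bijs {} {} = {id}"
  unfolding bijs_def by auto

lemma bijs_nonempty: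
  assumes "finite I" "finite J" "card I = card J"
  shows "bijs I J \<noteq> {}"
proof -
  obtain h where "bij_betw h I J" using finite_same_card_bij assms by blast
  then have "bij_betw (\<lambda>x. if x \<in> I then h x else x) I J"
    by (rule bij_betw_cong[THEN iffD1, rotated]) simp
  then have "(\<lambda>x. if x \<in> I then h x else x) \<in> bijs I J" unfolding bijs_def by auto
  then show ?thesis by blast
qed

lemma ex_min_trop_value:
  assumes "finite I" "finite J" "card I = card J"
  obtains \<rho> where "\<rho> \<in> bijs I J" "\<And>\<sigma>. \<sigma> \<in> bijs I J \<Longrightarrow> trop_value A I \<rho> \<le> trop_value A I \<sigma>"
  using arg_min_if_finite[OF finite_bijs bijs_nonempty, OF assms(1,2) assms, of "trop_value A I"]
  by (meson not_le_imp_less that)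

lemma bijs_comp_transpose:
  assumes "\<rho> \<in> bijs I J" "a \<in> I" "b \<in> I"
  shows "\<rho> \<circ> transpose a b \<in> bijs I J"
  using assms bij_betw_trans[of "transpose a b" I I \<rho> J] unfolding bijs_def
  by (auto simp: transpose_def)

lemma bijs_transpose_comp:
  assumes "\<rho> \<in> bijs I J" "a \<in> J" "b \<in> J"
  shows "(\<lambda>i. if i \<in> I then transpose a b (\<rho> i) else i) \<in> bijs I J"
proof -
  have "bij_betw (transpose a b \<circ> \<rho>) I J"
    using assms bij_betw_trans[of \<rho> I J "transpose a b" J] unfolding bijs_def by auto
  then show ?thesis
    unfolding bijs_def by (auto intro: bij_betw_cong[THEN iffD1, rotated])
qed

section \<open>Signs of adjacent transpositions\<close>

definition inversion_set :: "nat set \<Rightarrow> (nat \<Rightarrow> nat) \<Rightarrow> (nat \<times> nat) set" where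
  "inversion_set I \<rho> = {(i, i'). i \<in> I \<and> i' \<in> I \<and> i < i' \<and> \<rho> i > \<rho> i'}"

lemma inversions_eq_card: "inversions I \<rho> = card (inversion_set I \<rho>)"
  unfolding inversions_def inversion_set_def ..

lemma finite_inversion_set: "finite I \<Longrightarrow> finite (inversion_set I \<rho>)"
  unfolding inversion_set_def by (rule finite_subset[of _ "I \<times> I"]) auto

lemma inversions_cong: "(\<And>i. i \<in> I \<Longrightarrow> \<rho> i = \<sigma> i) \<Longrightarrow> inversions I \<rho> = inversions I \<sigma>"
  unfolding inversions_def by (intro arg_cong[where f = card]) auto

lemma neg_one_power_card_toggle:
  assumes "finite S" "finite T" "card (S - {p}) = card (T - {p})" "p \<in> S \<longleftrightarrow> p \<notin> T"
  shows "(-1::'a::ring_1) ^ card S = - ((-1) ^ card T)"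
proof -
  have "card S + card T = 2 * card (S - {p}) + 1"
    using assms card_Suc_Diff1[of S p] card_Suc_Diff1[of T p] by (cases "p \<in> S") auto
  then have "odd (card S + card T)" by presburger
  then show ?thesis
    by (cases "even (card T)") auto
qed

lemma transpose_adjacent_less_iff:
  fixes a b x y :: "'a::linorder"
  assumes "a < b" "\<forall>c\<in>J. \<not> (a < c \<and> c < b)" "x \<in> J" "y \<in> J" "{x, y} \<noteq> {a, b}"
  shows "transpose a b x < transpose a b y \<longleftrightarrow> x < y"
proof -
  have "x = a \<or> x = b \<or> x < a \<or> b < x" "y = a \<or> y = b \<or> y < a \<or> b < y"
    using assms(2-4) by force+
  then show ?thesis
    using assms(1,3-5) unfolding transpose_def by (auto simp: doubleton_eq_iff)
qed

lemma transpose_pair_inversion_set: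
  assumes "a \<in> I" "b \<in> I" "a < b" "\<forall>c\<in>I. \<not> (a < c \<and> c < b)"
    and "(i, i') \<in> inversion_set I (\<rho> \<circ> transpose a b) - {(a, b)}"
  shows "(transpose a b i, transpose a b i') \<in> inversion_set I \<rho> - {(a, b)}"
proof -
  have ii': "i \<in> I" "i' \<in> I" "i < i'" "\<rho> (transpose a b i) > \<rho> (transpose a b i')"
    "(i, i') \<noteq> (a, b)"
    using assms(5) unfolding inversion_set_def by auto
  then have "{i, i'} \<noteq> {a, b}"
    using assms(3) by (auto simp: doubleton_eq_iff)
  then have "transpose a b i < transpose a b i'"
    using transpose_adjacent_less_iff[OF assms(3,4) ii'(1,2)] ii'(3) by blast
  moreover have "(transpose a b i, transpose a b i') \<noteq> (a, b)"
    using ii'(3,5) assms(3) by (auto simp: transpose_eq_iff)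
  ultimately show ?thesis
    using ii' assms(1,2) unfolding inversion_set_def by (auto simp: transpose_def)
qed

(* Relabelling pairs by the transposition matches the inversions of the two bijections, except
   for the pair (a, b) itself. *)
lemma sign_comp_adjacent_transpose:
  assumes "finite I" "a \<in> I" "b \<in> I" "a < b" "\<forall>c\<in>I. \<not> (a < c \<and> c < b)"
    and "inj_on \<rho> I"
  shows "(-1::'a::ring_1) ^ inversions I (\<rho> \<circ> transpose a b) = - ((-1) ^ inversions I \<rho>)"
  unfolding inversions_eq_card
proof (rule neg_one_power_card_toggle[OF finite_inversion_set finite_inversion_set, OF assms(1,1)])
  let ?\<tau> = "transpose a b"
  have "\<rho> \<circ> ?\<tau> \<circ> ?\<tau> = \<rho>"
    by (simp add: comp_assoc)
  then have "bij_betw (map_prod ?\<tau> ?\<tau>)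
      (inversion_set I (\<rho> \<circ> ?\<tau>) - {(a, b)}) (inversion_set I \<rho> - {(a, b)})"
    using transpose_pair_inversion_set[OF assms(2-5), of _ _ \<rho>]
      transpose_pair_inversion_set[OF assms(2-5), of _ _ "\<rho> \<circ> ?\<tau>"]
    by (intro bij_betw_byWitness[where f' = "map_prod ?\<tau> ?\<tau>"]) auto
  then show "card (inversion_set I (\<rho> \<circ> ?\<tau>) - {(a, b)}) = card (inversion_set I \<rho> - {(a, b)})"
    by (rule bij_betw_same_card)
  have "\<rho> a \<noteq> \<rho> b"
    using assms(2-4,6) by (metis inj_on_eq_iff less_irrefl)
  then show "(a, b) \<in> inversion_set I (\<rho> \<circ> ?\<tau>) \<longleftrightarrow> (a, b) \<notin> inversion_set I \<rho>"
    using assms(2-4) unfolding inversion_set_def by auto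
qed

lemma sign_adjacent_transpose_comp:
  assumes "finite I" "a \<in> J" "b \<in> J" "a < b" "\<forall>c\<in>J. \<not> (a < c \<and> c < b)"
    and "bij_betw \<rho> I J"
  shows "(-1::'a::ring_1) ^ inversions I (transpose a b \<circ> \<rho>) = - ((-1) ^ inversions I \<rho>)"
proof -
  let ?\<tau> = "transpose a b"
  obtain i0 i1 where i01: "i0 \<in> I" "i1 \<in> I" "\<rho> i0 = a" "\<rho> i1 = b"
    using assms(2,3,6) by (metis bij_betw_iff_bijections)
  have inj: "inj_on \<rho> I"
    using assms(6) by (rule bij_betw_imp_inj_on)
  define p where "p = (min i0 i1, max i0 i1)"
  have "?\<tau> (\<rho> i') < ?\<tau> (\<rho> i) \<longleftrightarrow> \<rho> i' < \<rho> i"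
    if "i \<in> I" "i' \<in> I" "i < i'" "(i, i') \<noteq> p" for i i'
  proof -
    have "{\<rho> i', \<rho> i} \<noteq> {a, b}"
      using that i01 inj_on_eq_iff[OF inj] unfolding p_def
      by (auto simp: doubleton_eq_iff min_def max_def)
    then show ?thesis
      using transpose_adjacent_less_iff[OF assms(4,5)] that assms(6) by (meson bij_betwE)
  qed
  then have "inversion_set I (?\<tau> \<circ> \<rho>) - {p} = inversion_set I \<rho> - {p}"
    unfolding inversion_set_def by auto
  moreover have "p \<in> inversion_set I (?\<tau> \<circ> \<rho>) \<longleftrightarrow> p \<notin> inversion_set I \<rho>"
    using i01 assms(2-4) unfolding p_def inversion_set_def
    by (cases "i0 < i1") (auto simp: min_def max_def)
  ultimately show ?thesis
    unfolding inversions_eq_card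
    by (intro neg_one_power_card_toggle[OF finite_inversion_set finite_inversion_set, OF assms(1,1)])
      simp_all
qed

section \<open>Minors with a repeated row or column\<close>

lemma prod_coeff_cong:
  "(\<And>i. i \<in> I \<Longrightarrow> a i = b i) \<Longrightarrow> prod_coeff a I g = prod_coeff b I g"
  unfolding prod_coeff_def by (intro sum.cong prod.cong) auto

lemma prod_coeff_reindex:
  assumes h: "bij_betw h I' I"
  shows "prod_coeff a I g = prod_coeff (\<lambda>j. a (h j)) I' g"
proof -
  define h' where "h' = the_inv_into I' h"
  have h': "\<And>j. j \<in> I' \<Longrightarrow> h j \<in> I" "\<And>i. i \<in> I \<Longrightarrow> h' i \<in> I'"
      "\<And>i. i \<in> I \<Longrightarrow> h (h' i) = i" "\<And>j. j \<in> I' \<Longrightarrow> h' (h j) = j"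
    using h bij_betw_the_inv_into[OF h] unfolding h'_def
    by (auto simp: f_the_inv_into_f_bij_betw the_inv_into_f_f bij_betw_def dest: bij_betwE)
  have nonzero: "a i (\<beta> (h' i)) \<noteq> 0" if "\<forall>j\<in>I'. a (h j) (\<beta> j) \<noteq> 0" "i \<in> I" for \<beta> i
    using that h' by metis
  have sum_h: "(\<Sum>j\<in>I'. \<alpha> (h j)) = (\<Sum>i\<in>I. \<alpha> i)" for \<alpha> :: "nat \<Rightarrow> real"
    using sum.reindex_bij_betw[OF h] .
  have sum_h': "(\<Sum>i\<in>I. \<beta> (h' i)) = (\<Sum>j\<in>I'. \<beta> j)" for \<beta> :: "nat \<Rightarrow> real"
    using sum.reindex_bij_betw[OF bij_betw_the_inv_into[OF h]] unfolding h'_def .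
  have prod_h: "(\<Prod>j\<in>I'. a (h j) (\<alpha> (h j))) = (\<Prod>i\<in>I. a i (\<alpha> i))" for \<alpha>
    using prod.reindex_bij_betw[OF h] .
  show ?thesis
    unfolding prod_coeff_def
    by (rule sum.reindex_bij_witness[where j = "\<lambda>\<alpha> j. if j \<in> I' then \<alpha> (h j) else 0"
          and i = "\<lambda>\<beta> i. if i \<in> I then \<beta> (h' i) else 0"])
      (use h' nonzero sum_h sum_h' prod_h in \<open>auto intro!: ext cong: sum.cong prod.cong\<close>)
qed

lemma sum_eq_zero_sign_reversing_involution:
  fixes t :: "'a \<Rightarrow> 'b::{idom, ring_char_0}"
  assumes "\<And>x. x \<in> B \<Longrightarrow> \<Phi> x \<in> B" "\<And>x. x \<in> B \<Longrightarrow> \<Phi> (\<Phi> x) = x"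
    and "\<And>x. x \<in> B \<Longrightarrow> t (\<Phi> x) = - t x"
  shows "sum t B = 0"
proof -
  have "sum t B = sum (\<lambda>x. t (\<Phi> x)) B"
    by (rule sum.reindex_bij_witness[where i = \<Phi> and j = \<Phi>]) (use assms in auto)
  also have "\<dots> = - sum t B"
    using assms(3) by (simp add: sum_negf)
  finally show ?thesis
    by simp
qed

lemma minor_coeff_equal_adjacent_rows:
  assumes "finite I" "a \<in> I" "b \<in> I" "a < b" "\<forall>c\<in>I. \<not> (a < c \<and> c < b)"
    and "N a = N b"
  shows "minor_coeff N I J g = 0"
  unfolding minor_coeff_def
proof (rule sum_eq_zero_sign_reversing_involution[where \<Phi> = "\<lambda>\<rho>. \<rho> \<circ> transpose a b"])
  fix \<rho> assume \<rho>: "\<rho> \<in> bijs I J"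
  let ?\<tau> = "transpose a b"
  show "\<rho> \<circ> ?\<tau> \<in> bijs I J" "\<rho> \<circ> ?\<tau> \<circ> ?\<tau> = \<rho>"
    using bijs_comp_transpose[OF \<rho> assms(2,3)] by (auto simp: comp_assoc)
  have "prod_coeff (\<lambda>i. N i ((\<rho> \<circ> ?\<tau>) i)) I g = prod_coeff (\<lambda>i. N (?\<tau> i) (\<rho> i)) I g"
    using prod_coeff_reindex[of ?\<tau> I I "\<lambda>i. N i ((\<rho> \<circ> ?\<tau>) i)"] assms(2,3) by simp
  also have "\<dots> = prod_coeff (\<lambda>i. N i (\<rho> i)) I g"
    using assms(6) by (metis transpose_apply_first transpose_apply_second transpose_apply_other)
  finally show "(-1) ^ inversions I (\<rho> \<circ> ?\<tau>) * prod_coeff (\<lambda>i. N i ((\<rho> \<circ> ?\<tau>) i)) I g =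
      - ((-1) ^ inversions I \<rho> * prod_coeff (\<lambda>i. N i (\<rho> i)) I g)"
    using sign_comp_adjacent_transpose[OF assms(1-5) bij_betw_imp_inj_on[OF bijs_bij_betw[OF \<rho>]],
        where 'a = complex]
    by simp
qed

lemma minor_coeff_equal_adjacent_cols:
  assumes "finite I" "a \<in> J" "b \<in> J" "a < b" "\<forall>c\<in>J. \<not> (a < c \<and> c < b)"
    and "\<And>i. N i a = N i b"
  shows "minor_coeff N I J g = 0"
  unfolding minor_coeff_def
proof (rule sum_eq_zero_sign_reversing_involution
    [where \<Phi> = "\<lambda>\<rho> i. if i \<in> I then transpose a b (\<rho> i) else i"])
  \<comment> \<open>not \<open>transpose a b \<circ> \<rho>\<close>, which moves a and b when they lie outside I\<close>
  fix \<rho> assume \<rho>: "\<rho> \<in> bijs I J"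
  let ?\<tau> = "transpose a b" and ?\<rho>' = "\<lambda>i. if i \<in> I then transpose a b (\<rho> i) else i"
  show "?\<rho>' \<in> bijs I J"
    using bijs_transpose_comp[OF \<rho> assms(2,3)] .
  show "(\<lambda>i. if i \<in> I then ?\<tau> (?\<rho>' i) else i) = \<rho>"
    using \<rho> unfolding bijs_def by auto
  have "inversions I ?\<rho>' = inversions I (?\<tau> \<circ> \<rho>)"
    by (rule inversions_cong) simp
  moreover have "prod_coeff (\<lambda>i. N i (?\<rho>' i)) I g = prod_coeff (\<lambda>i. N i (\<rho> i)) I g"
    using assms(6) by (intro prod_coeff_cong) (simp add: transpose_def)
  ultimately show "(-1) ^ inversions I ?\<rho>' * prod_coeff (\<lambda>i. N i (?\<rho>' i)) I g =
      - ((-1) ^ inversions I \<rho> * prod_coeff (\<lambda>i. N i (\<rho> i)) I g)"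
    using sign_adjacent_transpose_comp[OF assms(1-5) bijs_bij_betw[OF \<rho>], where 'a = complex]
    by simp
qed

section \<open>Symmetric tropical singularity of a repeated row or column\<close>

lemma sym_monomial_remove2:
  assumes "finite I" "a \<in> I" "b \<in> I" "a \<noteq> b"
  shows "sym_monomial I \<sigma> =
    {#{a, \<sigma> a}, {b, \<sigma> b}#} + image_mset (\<lambda>i. {i, \<sigma> i}) (mset_set (I - {a, b}))"
proof -
  have "mset_set I = add_mset a (add_mset b (mset_set (I - {a, b})))"
    using assms by (metis Diff_insert2 finite_Diff insert_Diff_single insert_absorb insert_iff
        mset_set.insert_remove insert_Diff)
  then show ?thesis
    unfolding sym_monomial_def by simp
qed

lemma swapped_doubletons_mset_neq:
  assumes "p \<noteq> q" "u \<noteq> v"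
  shows "{#{p, u}, {q, v}#} + R \<noteq> {#{p, v}, {q, u}#} + R"
proof
  assume "{#{p, u}, {q, v}#} + R = {#{p, v}, {q, u}#} + R"
  then have "{p, u} \<in># {#{p, v}, {q, u}#}"
    by (metis add_right_cancel union_single_eq_member add_mset_commute)
  then show False
    using assms by (auto simp: doubleton_eq_iff)
qed

lemma sym_monomial_comp_transpose:
  assumes "finite I" "p \<in> I" "q \<in> I" "p \<noteq> q" "inj_on \<rho> I"
  shows "sym_monomial I (\<rho> \<circ> transpose p q) \<noteq> sym_monomial I \<rho>"
proof -
  have "image_mset (\<lambda>i. {i, (\<rho> \<circ> transpose p q) i}) (mset_set (I - {p, q})) =
      image_mset (\<lambda>i. {i, \<rho> i}) (mset_set (I - {p, q}))"
    using assms(1) by (intro image_mset_cong) auto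
  moreover have "\<rho> p \<noteq> \<rho> q"
    using assms(2-5) by (meson inj_on_eq_iff)
  ultimately show ?thesis
    using sym_monomial_remove2[OF assms(1-4)] swapped_doubletons_mset_neq[OF assms(4)] by auto
qed

lemma sym_trop_singular_cong:
  assumes "\<And>i j. i \<in> I \<Longrightarrow> j \<in> J \<Longrightarrow> A i j = B i j"
  shows "sym_trop_singular A I J \<longleftrightarrow> sym_trop_singular B I J"
proof -
  have "trop_value A I \<rho> = trop_value B I \<rho>" if "\<rho> \<in> bijs I J" for \<rho>
    using that assms unfolding trop_value_def bijs_def by (auto dest: bij_betwE intro: sum.cong)
  then show ?thesis
    unfolding sym_trop_singular_def by (metis (no_types, lifting))
qed

lemma sym_trop_singularI:
  assumes "finite I" "\<rho> \<in> bijs I J" "\<And>\<sigma>. \<sigma> \<in> bijs I J \<Longrightarrow> trop_value A I \<rho> \<le> trop_value A I \<sigma>"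
    and "p \<in> I" "q \<in> I" "p \<noteq> q" "trop_value A I (\<rho> \<circ> transpose p q) = trop_value A I \<rho>"
  shows "sym_trop_singular A I J"
  unfolding sym_trop_singular_def
  using assms bijs_comp_transpose[OF assms(2,4,5)]
    sym_monomial_comp_transpose[OF assms(1,4-6) bij_betw_imp_inj_on[OF bijs_bij_betw[OF assms(2)]]]
  by metis

lemma sym_trop_singular_equal_rows:
  assumes "finite I" "finite J" "card I = card J" "a \<in> I" "b \<in> I" "a \<noteq> b"
    and "A a = A b"
  shows "sym_trop_singular A I J"
proof -
  obtain \<rho> where \<rho>: "\<rho> \<in> bijs I J" "\<And>\<sigma>. \<sigma> \<in> bijs I J \<Longrightarrow> trop_value A I \<rho> \<le> trop_value A I \<sigma>"
    using ex_min_trop_value[OF assms(1-3)] by blast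
  have "trop_value A I (\<rho> \<circ> transpose a b) = (\<Sum>i\<in>I. A (transpose a b i) (\<rho> (transpose a b i)))"
    unfolding trop_value_def using assms(7)
    by (intro sum.cong) (auto simp: transpose_def)
  also have "\<dots> = trop_value A I \<rho>"
    unfolding trop_value_def using assms(4,5) by (intro sum.reindex_bij_betw) simp
  finally show ?thesis
    using sym_trop_singularI[OF assms(1) \<rho> assms(4-6)] by blast
qed

lemma sym_trop_singular_equal_cols:
  assumes "finite I" "finite J" "card I = card J" "a \<in> J" "b \<in> J" "a \<noteq> b"
    and "\<And>i. A i a = A i b"
  shows "sym_trop_singular A I J"
proof -
  obtain \<rho> where \<rho>: "\<rho> \<in> bijs I J" "\<And>\<sigma>. \<sigma> \<in> bijs I J \<Longrightarrow> trop_value A I \<rho> \<le> trop_value A I \<sigma>"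
    using ex_min_trop_value[OF assms(1-3)] by blast
  have bij: "bij_betw \<rho> I J"
    using \<rho>(1) by (rule bijs_bij_betw)
  obtain p q where pq: "p \<in> I" "q \<in> I" "\<rho> p = a" "\<rho> q = b"
    using assms(4,5) bij by (metis bij_betw_iff_bijections)
  have "\<rho> (transpose p q i) = transpose a b (\<rho> i)" if "i \<in> I" for i
    using that pq bij_betw_imp_inj_on[OF bij] by (auto simp: transpose_def inj_on_eq_iff)
  then have "trop_value A I (\<rho> \<circ> transpose p q) = trop_value A I \<rho>"
    unfolding trop_value_def using assms(7)
    by (intro sum.cong) (auto simp: transpose_def)
  then show ?thesis
    using sym_trop_singularI[OF assms(1) \<rho> pq(1,2)] pq assms(6) by blast
qed

section \<open>Relabelling rows and columns\<close>

definition push_bij :: "(nat \<Rightarrow> nat) \<Rightarrow> nat set \<Rightarrow> (nat \<Rightarrow> nat) \<Rightarrow> nat \<Rightarrow> nat" where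
  "push_bij f I \<rho> x = (if x \<in> f ` I then f (\<rho> (the_inv_into I f x)) else x)"

context
  fixes f :: "nat \<Rightarrow> nat" and I J :: "nat set"
  assumes inj_I: "inj_on f I" and inj_J: "inj_on f J"
begin

lemma push_bij_apply: "i \<in> I \<Longrightarrow> push_bij f I \<rho> (f i) = f (\<rho> i)"
  unfolding push_bij_def using inj_I by (simp add: the_inv_into_f_f)

lemma bij_betw_push_bij: "bij_betw (push_bij f I) (bijs I J) (bijs (f ` I) (f ` J))"
proof (rule bij_betw_byWitness[where f' = "\<lambda>\<sigma> i. if i \<in> I then the_inv_into J f (\<sigma> (f i)) else i"])
  have fI: "bij_betw f I (f ` I)" and fJ: "bij_betw f J (f ` J)"
    using inj_I inj_J by (simp_all add: inj_on_imp_bij_betw)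
  show "\<forall>\<rho>\<in>bijs I J. (\<lambda>i. if i \<in> I then the_inv_into J f (push_bij f I \<rho> (f i)) else i) = \<rho>"
    using inj_J by (auto simp: bijs_def push_bij_apply the_inv_into_f_f bij_betwE)
  show "\<forall>\<sigma>\<in>bijs (f ` I) (f ` J).
      push_bij f I (\<lambda>i. if i \<in> I then the_inv_into J f (\<sigma> (f i)) else i) = \<sigma>"
  proof (intro ballI ext)
    fix \<sigma> x assume \<sigma>: "\<sigma> \<in> bijs (f ` I) (f ` J)"
    show "push_bij f I (\<lambda>i. if i \<in> I then the_inv_into J f (\<sigma> (f i)) else i) x = \<sigma> x"
    proof (cases "x \<in> f ` I")
      case True
      then obtain i where "i \<in> I" "x = f i" by blast
      moreover have "\<sigma> (f i) \<in> f ` J"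
        using \<sigma> \<open>i \<in> I\<close> unfolding bijs_def by (auto dest: bij_betwE)
      ultimately show ?thesis
        using inj_J by (simp add: push_bij_apply f_the_inv_into_f)
    next
      case False
      then show ?thesis
        using \<sigma> unfolding bijs_def by (simp add: push_bij_def)
    qed
  qed
  show "push_bij f I ` bijs I J \<subseteq> bijs (f ` I) (f ` J)"
  proof clarify
    fix \<rho> assume "\<rho> \<in> bijs I J"
    then have "bij_betw (f \<circ> \<rho> \<circ> the_inv_into I f) (f ` I) (f ` J)"
      using bij_betw_trans[OF bij_betw_trans[OF bij_betw_the_inv_into[OF fI] bijs_bij_betw] fJ]
      by (simp add: comp_assoc)
    then show "push_bij f I \<rho> \<in> bijs (f ` I) (f ` J)"
      unfolding bijs_def by (auto simp: push_bij_def intro: bij_betw_cong[THEN iffD1, rotated])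
  qed
  show "(\<lambda>\<sigma> i. if i \<in> I then the_inv_into J f (\<sigma> (f i)) else i) ` bijs (f ` I) (f ` J) \<subseteq> bijs I J"
  proof clarify
    fix \<sigma> assume "\<sigma> \<in> bijs (f ` I) (f ` J)"
    then have "bij_betw (the_inv_into J f \<circ> \<sigma> \<circ> f) I J"
      using bij_betw_trans[OF bij_betw_trans[OF fI bijs_bij_betw] bij_betw_the_inv_into[OF fJ]]
      by (simp add: comp_assoc)
    then show "(\<lambda>i. if i \<in> I then the_inv_into J f (\<sigma> (f i)) else i) \<in> bijs I J"
      unfolding bijs_def by (auto intro: bij_betw_cong[THEN iffD1, rotated])
  qed
qed

lemma trop_value_push_bij:
  "trop_value A (f ` I) (push_bij f I \<rho>) = trop_value (\<lambda>i j. A (f i) (f j)) I \<rho>"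
  unfolding trop_value_def using inj_I by (simp add: sum.reindex push_bij_apply)

lemma sym_monomial_push_bij:
  assumes "finite I"
  shows "sym_monomial (f ` I) (push_bij f I \<rho>) = image_mset ((`) f) (sym_monomial I \<rho>)"
proof -
  have "sym_monomial (f ` I) (push_bij f I \<rho>) = image_mset (\<lambda>i. {f i, push_bij f I \<rho> (f i)}) (mset_set I)"
    unfolding sym_monomial_def by (simp add: image_mset_mset_set[OF inj_I, symmetric] multiset.map_comp comp_def)
  also have "\<dots> = image_mset ((`) f) (sym_monomial I \<rho>)"
    unfolding sym_monomial_def using assms
    by (auto simp: multiset.map_comp comp_def push_bij_apply intro: image_mset_cong)
  finally show ?thesis .
qed

lemma sym_trop_singular_relabel:
  assumes "finite I" "sym_trop_singular A (f ` I) (f ` J)"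
  shows "sym_trop_singular (\<lambda>i j. A (f i) (f j)) I J"
proof -
  note push = bij_betw_push_bij
  obtain \<sigma>1 \<sigma>2 where \<sigma>: "\<sigma>1 \<in> bijs (f ` I) (f ` J)" "\<sigma>2 \<in> bijs (f ` I) (f ` J)"
    "\<forall>\<sigma>\<in>bijs (f ` I) (f ` J). trop_value A (f ` I) \<sigma>1 \<le> trop_value A (f ` I) \<sigma>"
    "trop_value A (f ` I) \<sigma>2 = trop_value A (f ` I) \<sigma>1" "sym_monomial (f ` I) \<sigma>1 \<noteq> sym_monomial (f ` I) \<sigma>2"
    using assms(2) unfolding sym_trop_singular_def by blast
  obtain \<rho>1 \<rho>2 where "\<rho>1 \<in> bijs I J" "\<sigma>1 = push_bij f I \<rho>1" "\<rho>2 \<in> bijs I J" "\<sigma>2 = push_bij f I \<rho>2"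
    using \<sigma>(1,2) bij_betw_imp_surj_on[OF push] by (metis imageE)
  moreover have "sym_monomial I \<rho>1 \<noteq> sym_monomial I \<rho>2"
    using \<sigma>(5) sym_monomial_push_bij[OF assms(1)] calculation by metis
  ultimately show ?thesis
    unfolding sym_trop_singular_def trop_value_push_bij[symmetric]
    using \<sigma>(3,4) bij_betwE[OF push] by metis
qed

end

lemma inversion_set_push_bij:
  assumes "strict_mono_on I f" "strict_mono_on J f" "\<rho> \<in> bijs I J"
  shows "inversion_set (f ` I) (push_bij f I \<rho>) = map_prod f f ` inversion_set I \<rho>"
proof -
  have inj: "inj_on f I" "inj_on f J"
    using assms(1,2) by (simp_all add: strict_mono_on_imp_inj_on)
  have "f i < f i' \<longleftrightarrow> i < i'" if "i \<in> I" "i' \<in> I" for i i'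
    using assms(1) that by (simp add: strict_mono_on_less)
  moreover have "f (\<rho> i') < f (\<rho> i) \<longleftrightarrow> \<rho> i' < \<rho> i" if "i \<in> I" "i' \<in> I" for i i'
    using assms(2) bij_betwE[OF bijs_bij_betw[OF assms(3)]] that by (simp add: strict_mono_on_less)
  ultimately show ?thesis
    unfolding inversion_set_def using push_bij_apply[OF inj] by fastforce
qed

lemma inversions_push_bij:
  assumes "strict_mono_on I f" "strict_mono_on J f" "\<rho> \<in> bijs I J"
  shows "inversions (f ` I) (push_bij f I \<rho>) = inversions I \<rho>"
proof -
  have "inj_on (map_prod f f) (inversion_set I \<rho>)"
    using strict_mono_on_imp_inj_on[OF assms(1)] unfolding inversion_set_def inj_on_def by auto
  then show ?thesis
    unfolding inversions_eq_card inversion_set_push_bij[OF assms] by (rule card_image)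
qed

lemma minor_coeff_relabel:
  assumes "strict_mono_on I f" "strict_mono_on J f"
  shows "minor_coeff N (f ` I) (f ` J) g = minor_coeff (\<lambda>i j. N (f i) (f j)) I J g"
proof -
  have inj: "inj_on f I" "inj_on f J"
    using assms by (simp_all add: strict_mono_on_imp_inj_on)
  have "prod_coeff (\<lambda>x. N x (push_bij f I \<rho> x)) (f ` I) g = prod_coeff (\<lambda>i. N (f i) (f (\<rho> i))) I g"
    for \<rho>
    using prod_coeff_reindex[OF inj_on_imp_bij_betw[OF inj(1)]] push_bij_apply[OF inj]
    by (simp cong: prod_coeff_cong)
  then show ?thesis
    unfolding minor_coeff_def sum.reindex_bij_betw[OF bij_betw_push_bij[OF inj], symmetric]
    using inversions_push_bij[OF assms] by (auto intro: sum.cong)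
qed

definition trop_singular_minors :: "nat \<Rightarrow> nat \<Rightarrow> (nat \<Rightarrow> nat \<Rightarrow> real) \<Rightarrow> bool" where
  "trop_singular_minors n r A \<longleftrightarrow>
     (\<forall>I J. I \<subseteq> {..<n} \<longrightarrow> J \<subseteq> {..<n} \<longrightarrow> card I = r \<longrightarrow> card J = r \<longrightarrow> sym_trop_singular A I J)"

definition low_rank_sym_lift :: "nat \<Rightarrow> nat \<Rightarrow> (nat \<Rightarrow> nat \<Rightarrow> real) \<Rightarrow> bool" where
  "low_rank_sym_lift n r A \<longleftrightarrow> (\<exists>M. sym_lift n A M \<and> rank_le_minors n r M)"

lemma minors_trop_basis_iff:
  "minors_trop_basis n r \<longleftrightarrow>
     (\<forall>A. sym_real n A \<longrightarrow> (trop_singular_minors n r A \<longleftrightarrow> low_rank_sym_lift n r A))"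
  unfolding minors_trop_basis_def trop_singular_minors_def low_rank_sym_lift_def ..

lemma minor_coeff_empty: "minor_coeff M {} {} 0 = 1"
proof -
  have "{\<alpha> :: nat \<Rightarrow> real. \<forall>i. \<alpha> i = 0} = {\<lambda>_. 0}"
    by auto
  then show ?thesis
    unfolding minor_coeff_def prod_coeff_def inversions_def bijs_empty by simp
qed

lemma minors_trop_basis_0: "minors_trop_basis 0 r"
proof (cases "r = 0")
  case True
  have "\<not> sym_trop_singular A {} {}" for A
    unfolding sym_trop_singular_def bijs_empty by simp
  moreover have "\<not> rank_le_minors 0 0 M" for M
    using minor_coeff_empty[of M] unfolding rank_le_minors_def minor_vanishes_def
    by (metis card.empty empty_subsetI one_neq_zero)
  ultimately show ?thesis
    using True unfolding minors_trop_basis_iff trop_singular_minors_def low_rank_sym_lift_def by auto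
next
  case False
  then show ?thesis
    unfolding minors_trop_basis_iff trop_singular_minors_def low_rank_sym_lift_def sym_lift_def
      rank_le_minors_def by auto
qed

lemma rank_le_minors_mono: "m \<le> n \<Longrightarrow> rank_le_minors n r M \<Longrightarrow> rank_le_minors m r M"
  unfolding rank_le_minors_def by (metis lessThan_subset_iff subset_trans)

section \<open>Duplicating the last row and column\<close>

definition dup_last :: "nat \<Rightarrow> (nat \<Rightarrow> nat \<Rightarrow> 'a) \<Rightarrow> nat \<Rightarrow> nat \<Rightarrow> 'a" where
  "dup_last k A i j = A (min i k) (min j k)"

lemma dup_last_submatrix_cases:
  assumes "I \<subseteq> {..<Suc (Suc k)}" "J \<subseteq> {..<Suc (Suc k)}"
  obtains (rows) "k \<in> I" "Suc k \<in> I"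
    | (cols) "k \<in> J" "Suc k \<in> J"
    | (relabel) "strict_mono_on I (\<lambda>i. min i k)" "strict_mono_on J (\<lambda>i. min i k)"
      "(\<lambda>i. min i k) ` I \<subseteq> {..<Suc k}" "(\<lambda>i. min i k) ` J \<subseteq> {..<Suc k}"
proof -
  have "strict_mono_on X (\<lambda>i. min i k)" if "X \<subseteq> {..<Suc (Suc k)}" "\<not> (k \<in> X \<and> Suc k \<in> X)" for X
    using that unfolding strict_mono_on_def by (auto simp: less_Suc_eq min_def subset_iff)
  then show ?thesis
    using assms that by fastforce
qed

lemma sym_real_dup_last: "sym_real (Suc k) A \<Longrightarrow> sym_real (Suc (Suc k)) (dup_last k A)"
  unfolding sym_real_def dup_last_def by simp

lemma sym_lift_dup_last:
  "sym_lift (Suc k) A M \<Longrightarrow> sym_lift (Suc (Suc k)) (dup_last k A) (dup_last k M)"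
  unfolding sym_lift_def dup_last_def by simp

lemma rank_le_minors_dup_last:
  assumes "rank_le_minors (Suc k) r M"
  shows "rank_le_minors (Suc (Suc k)) r (dup_last k M)"
  unfolding rank_le_minors_def minor_vanishes_def
proof (intro allI impI)
  fix I J g assume IJ: "I \<subseteq> {..<Suc (Suc k)}" "J \<subseteq> {..<Suc (Suc k)}" "card I = r" "card J = r"
  have fin: "finite I"
    using IJ(1) finite_subset by blast
  from IJ(1,2) show "minor_coeff (dup_last k M) I J g = 0"
  proof (cases rule: dup_last_submatrix_cases)
    case rows
    have "dup_last k M k = dup_last k M (Suc k)"
      by (simp add: dup_last_def fun_eq_iff)
    then show ?thesis
      using minor_coeff_equal_adjacent_rows[OF fin rows lessI] by simp
  next
    case cols
    have "dup_last k M i k = dup_last k M i (Suc k)" for i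
      by (simp add: dup_last_def)
    then show ?thesis
      using minor_coeff_equal_adjacent_cols[OF fin cols lessI] by simp
  next
    case relabel
    have "card ((\<lambda>i. min i k) ` I) = r" "card ((\<lambda>i. min i k) ` J) = r"
      using IJ(3,4) card_image[OF strict_mono_on_imp_inj_on[OF relabel(1)]]
        card_image[OF strict_mono_on_imp_inj_on[OF relabel(2)]] by simp_all
    then have "minor_coeff M ((\<lambda>i. min i k) ` I) ((\<lambda>i. min i k) ` J) g = 0"
      using assms relabel(3,4) unfolding rank_le_minors_def minor_vanishes_def by blast
    then show ?thesis
      unfolding minor_coeff_relabel[OF relabel(1,2)] dup_last_def[abs_def] .
  qed
qed

lemma low_rank_sym_lift_dup_last:
  "low_rank_sym_lift (Suc (Suc k)) r (dup_last k A) \<longleftrightarrow> low_rank_sym_lift (Suc k) r A"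
proof
  assume "low_rank_sym_lift (Suc (Suc k)) r (dup_last k A)"
  then obtain M where "sym_lift (Suc (Suc k)) (dup_last k A) M" "rank_le_minors (Suc (Suc k)) r M"
    unfolding low_rank_sym_lift_def by blast
  then have "sym_lift (Suc k) A M" "rank_le_minors (Suc k) r M"
    using rank_le_minors_mono[of "Suc k" "Suc (Suc k)"] unfolding sym_lift_def dup_last_def by auto
  then show "low_rank_sym_lift (Suc k) r A"
    unfolding low_rank_sym_lift_def by blast
next
  assume "low_rank_sym_lift (Suc k) r A"
  then show "low_rank_sym_lift (Suc (Suc k)) r (dup_last k A)"
    unfolding low_rank_sym_lift_def using sym_lift_dup_last rank_le_minors_dup_last by blast
qed

lemma trop_singular_minors_dup_last:
  "trop_singular_minors (Suc (Suc k)) r (dup_last k A) \<longleftrightarrow> trop_singular_minors (Suc k) r A"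
proof
  assume sing: "trop_singular_minors (Suc (Suc k)) r (dup_last k A)"
  show "trop_singular_minors (Suc k) r A"
    unfolding trop_singular_minors_def
  proof (intro allI impI)
    fix I J assume IJ: "I \<subseteq> {..<Suc k}" "J \<subseteq> {..<Suc k}" "card I = r" "card J = r"
    then have "I \<subseteq> {..<Suc (Suc k)}" "J \<subseteq> {..<Suc (Suc k)}"
      by auto
    then have "sym_trop_singular (dup_last k A) I J"
      using sing IJ(3,4) unfolding trop_singular_minors_def by blast
    moreover have "sym_trop_singular (dup_last k A) I J \<longleftrightarrow> sym_trop_singular A I J"
      using IJ(1,2)
      by (intro sym_trop_singular_cong) (auto simp: dup_last_def subset_iff less_Suc_eq_le min_absorb1)
    ultimately show "sym_trop_singular A I J"
      by blast
  qed
next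
  assume sing: "trop_singular_minors (Suc k) r A"
  show "trop_singular_minors (Suc (Suc k)) r (dup_last k A)"
    unfolding trop_singular_minors_def
  proof (intro allI impI)
    fix I J assume IJ: "I \<subseteq> {..<Suc (Suc k)}" "J \<subseteq> {..<Suc (Suc k)}" "card I = r" "card J = r"
    then have fin: "finite I" "finite J" "card I = card J"
      using finite_subset by auto
    from IJ(1,2) show "sym_trop_singular (dup_last k A) I J"
    proof (cases rule: dup_last_submatrix_cases)
      case rows
      have "dup_last k A k = dup_last k A (Suc k)"
        by (simp add: dup_last_def fun_eq_iff)
      then show ?thesis
        using sym_trop_singular_equal_rows[OF fin rows] by simp
    next
      case cols
      have "dup_last k A i k = dup_last k A i (Suc k)" for i
        by (simp add: dup_last_def)
      then show ?thesis
        using sym_trop_singular_equal_cols[OF fin cols] by simp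
    next
      case relabel
      have "card ((\<lambda>i. min i k) ` I) = r" "card ((\<lambda>i. min i k) ` J) = r"
        using IJ(3,4) card_image[OF strict_mono_on_imp_inj_on[OF relabel(1)]]
          card_image[OF strict_mono_on_imp_inj_on[OF relabel(2)]] by simp_all
      then have "sym_trop_singular A ((\<lambda>i. min i k) ` I) ((\<lambda>i. min i k) ` J)"
        using sing relabel(3,4) unfolding trop_singular_minors_def by blast
      then show ?thesis
        unfolding dup_last_def[abs_def]
        by (rule sym_trop_singular_relabel[OF strict_mono_on_imp_inj_on strict_mono_on_imp_inj_on,
              OF relabel(1,2) fin(1)])
    qed
  qed
qed

theorem corollary3:
  fixes n r :: nat
  assumes "\<not> minors_trop_basis n r"
  shows "\<not> minors_trop_basis (Suc n) r"
proof
  assume basis: "minors_trop_basis (Suc n) r"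
  obtain k where n: "n = Suc k"
    using assms minors_trop_basis_0 by (cases n) auto
  obtain A where A: "sym_real n A" "trop_singular_minors n r A \<noteq> low_rank_sym_lift n r A"
    using assms unfolding minors_trop_basis_iff by blast
  have "sym_real (Suc n) (dup_last k A)"
    using sym_real_dup_last A(1) unfolding n .
  moreover have "trop_singular_minors (Suc n) r (dup_last k A) \<noteq> low_rank_sym_lift (Suc n) r (dup_last k A)"
    using A(2) unfolding n trop_singular_minors_dup_last low_rank_sym_lift_dup_last .
  ultimately show False
    using basis unfolding minors_trop_basis_iff by blast
qed

end
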